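(* If $F:\mathbb{R}\to\mathbb{R}$ is a Darboux function which is continuous at only countably many points, then there is a non-constant continuous function $f:\mathbb{R}\to\mathbb{R}$ such that $F+f$ is Darboux.
   Context: A function $F:\mathbb{R}\to\mathbb{R}$ is Darboux if the image under $F$ of every interval is an interval. *)

theory Defs
  imports "HOL-Analysis.Analysis"
begin

definition darboux :: "(real \<Rightarrow> real) \<Rightarrow> bool" where
  "darboux F \<longleftrightarrow> (\<forall>I::real set. is_interval I \<longrightarrow> is_interval (F ` I))"

end

theory Submission
  imports Defs
begin

text \<open>Countably many continuity points and Baire's theorem give rationals \<open>r < s\<close> and an
  open interval \<open>W\<close> such that \<open>F\<close> maps every open subinterval of \<open>W\<close> onto a superset of
  \<open>(r, s)\<close>. A second Baire argument gives a dense \<open>G\<^sub>\<delta>\<close> of irrational points \<open>x\<close> near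
  which every rational level set \<open>{F > q}\<close>, \<open>{F < q}\<close> is either absent or dense; at such
  points of \<open>W\<close> every value strictly between \<open>min r (F x)\<close> and \<open>max s (F x)\<close> is attained in
  all small intervals near \<open>x\<close>. Inside \<open>W\<close> these points contain a Cantor set \<open>K\<close>, and
  \<open>f = (s - r) / 2 \<cdot> c\<close> with \<open>c\<close> the associated Cantor function works. On a gap of \<open>K\<close> the
  function \<open>f\<close> is constant, so \<open>F + f\<close> inherits intermediate values from \<open>F\<close>. Otherwise the
  extreme points of \<open>K\<close> in the interval reduce the problem to a value strictly between the
  values of \<open>F + f\<close> at two points of \<open>K\<close>; as \<open>f\<close> oscillates by less than \<open>s - r\<close>, that value
  lies in the span at one of them, and it is attained by \<open>F + f\<close> there because \<open>f\<close> is
  nearly constant and its constancy intervals are dense.\<close>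

lemma mem_is_interval_1_min_max:
  fixes S :: "real set"
  assumes "is_interval S" "u \<in> S" "w \<in> S" "v \<in> {min u w..max u w}"
  shows "v \<in> S"
proof (cases "u \<le> w")
  case True
  then show ?thesis using assms(4) by (intro mem_is_interval_1_I[OF assms(1-3)]) auto
next
  case False
  then show ?thesis using assms(4) by (intro mem_is_interval_1_I[OF assms(1,3,2)]) auto
qed

lemma darboux_iff_intermediate_values:
  "darboux F \<longleftrightarrow>
     (\<forall>p q y. p \<le> q \<longrightarrow> y \<in> {min (F p) (F q)..max (F p) (F q)} \<longrightarrow> (\<exists>z\<in>{p..q}. F z = y))"
proof
  assume dF: "darboux F"
  show "\<forall>p q y. p \<le> q \<longrightarrow> y \<in> {min (F p) (F q)..max (F p) (F q)} \<longrightarrow> (\<exists>z\<in>{p..q}. F z = y)"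
  proof (intro allI impI)
    fix p q y assume pq: "p \<le> q" and y: "y \<in> {min (F p) (F q)..max (F p) (F q)}"
    have "is_interval (F ` {p..q})"
      using dF by (simp add: darboux_def is_interval_cc)
    moreover have "F p \<in> F ` {p..q}" "F q \<in> F ` {p..q}"
      using pq by auto
    ultimately have "y \<in> F ` {p..q}"
      using y by (rule mem_is_interval_1_min_max)
    then show "\<exists>z\<in>{p..q}. F z = y" by auto
  qed
next
  assume ivt: "\<forall>p q y. p \<le> q \<longrightarrow> y \<in> {min (F p) (F q)..max (F p) (F q)} \<longrightarrow> (\<exists>z\<in>{p..q}. F z = y)"
  show "darboux F"
    unfolding darboux_def
  proof (intro allI impI)
    fix I :: "real set" assume I: "is_interval I"
    show "is_interval (F ` I)"
      unfolding is_interval_1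
    proof (intro ballI allI impI)
      fix u v y assume "u \<in> F ` I" "v \<in> F ` I" "u \<le> y \<and> y \<le> v"
      then obtain p q where pq: "p \<in> I" "q \<in> I" "y \<in> {min (F p) (F q)..max (F p) (F q)}"
        by auto
      have "\<exists>z\<in>{min p q..max p q}. F z = y"
      proof (cases "p \<le> q")
        case True
        then show ?thesis using ivt pq(3) by simp
      next
        case False
        then show ?thesis
          using ivt[rule_format, of q p y] pq(3) by (simp add: min.commute max.commute)
      qed
      then obtain z where z: "min p q \<le> z" "z \<le> max p q" "F z = y" by auto
      have "min p q \<in> I" "max p q \<in> I"
        using pq(1,2) by (simp_all add: min_def max_def)
      then have "z \<in> I"
        using mem_is_interval_1_I[OF I _ _ z(1,2)] by blast
      then show "y \<in> F ` I" using z(3) by blast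
    qed
  qed
qed

lemma darboux_image_greaterThanLessThan:
  assumes "darboux F" "u \<in> F ` {a<..<b}" "w \<in> F ` {a<..<b}" "v \<in> {min u w..max u w}"
  shows "v \<in> F ` {a<..<b}"
proof -
  have "is_interval (F ` {a<..<b})"
    using assms(1) by (simp add: darboux_def is_interval_oo)
  then show ?thesis
    using assms(2-) by (rule mem_is_interval_1_min_max)
qed

definition onto_subintervals :: "(real \<Rightarrow> real) \<Rightarrow> real set \<Rightarrow> real set \<Rightarrow> bool" where
  "onto_subintervals F W V \<longleftrightarrow> (\<forall>a b. a < b \<longrightarrow> {a<..<b} \<subseteq> W \<longrightarrow> V \<subseteq> F ` {a<..<b})"

text \<open>The open intervals in question need not contain \<open>x\<close>.\<close>
definition attains_near :: "(real \<Rightarrow> real) \<Rightarrow> real \<Rightarrow> real \<Rightarrow> bool" where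
  "attains_near F x v \<longleftrightarrow> (\<exists>h>0. onto_subintervals F (ball x h) {v})"

definition attains_span_near :: "(real \<Rightarrow> real) \<Rightarrow> real \<Rightarrow> real \<Rightarrow> real \<Rightarrow> bool" where
  "attains_span_near F r s x \<longleftrightarrow> (\<forall>v\<in>{min r (F x)<..<max s (F x)}. attains_near F x v)"

lemma onto_subintervals_mono:
  "onto_subintervals F W V \<Longrightarrow> W' \<subseteq> W \<Longrightarrow> V' \<subseteq> V \<Longrightarrow> onto_subintervals F W' V'"
  unfolding onto_subintervals_def by blast

lemma attains_near_ball:
  assumes "onto_subintervals F W V" "open W" "x \<in> W" "v \<in> V"
  shows "attains_near F x v"
proof -
  obtain h where "h > 0" "ball x h \<subseteq> W"
    using assms(2,3) open_contains_ball_eq by blast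
  then show ?thesis
    using onto_subintervals_mono[OF assms(1)] assms(4) unfolding attains_near_def by blast
qed

lemma attains_near_inter:
  assumes "attains_near F x u" "attains_near G x v"
  obtains h where "h > 0" "onto_subintervals F (ball x h) {u}" "onto_subintervals G (ball x h) {v}"
proof -
  obtain h1 h2 where "h1 > 0" "onto_subintervals F (ball x h1) {u}"
    and "h2 > 0" "onto_subintervals G (ball x h2) {v}"
    using assms unfolding attains_near_def by blast
  then show ?thesis
    using that[of "min h1 h2"] onto_subintervals_mono by (simp add: subset_ball)
qed

lemma attains_near_between:
  assumes "attains_near F k y" "a < b" "k \<in> {a..b}"
  shows "\<exists>z\<in>{a<..<b}. F z = y"
proof -
  obtain h where h: "h > 0" "onto_subintervals F (ball k h) {y}"
    using assms(1) unfolding attains_near_def by blast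
  let ?c = "max a (k - h)" and ?d = "min b (k + h)"
  have "?c < ?d" "{?c<..<?d} \<subseteq> ball k h"
    using assms(2,3) h(1) by (auto simp: ball_eq_greaterThanLessThan)
  then have "y \<in> F ` {?c<..<?d}"
    using h(2) unfolding onto_subintervals_def by blast
  then show ?thesis by force
qed

section \<open>Adding a function that is constant off a nowhere dense closed set\<close>

lemma between_middle_if_not_between_ends:
  fixes a b c d y :: real
  assumes "y \<in> {min a d..max a d}" "y \<notin> {min a b..max a b}" "y \<notin> {min c d..max c d}"
  shows "y \<in> {min b c<..<max b c}"
  using assms by (auto simp: min_def max_def split: if_splits)

text \<open>If neither shifted value lies in its span, then \<open>f\<close> would have to move by at least
  \<open>s - r\<close> between the two points.\<close>
lemma shifted_value_in_span:
  fixes r s F1 F2 f1 f2 y :: real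
  assumes "\<bar>f1 - f2\<bar> < s - r" "y \<in> {min (F1 + f1) (F2 + f2)<..<max (F1 + f1) (F2 + f2)}"
  shows "y - f1 \<in> {min r F1<..<max s F1} \<or> y - f2 \<in> {min r F2<..<max s F2}"
  using assms by (auto simp: min_def max_def abs_less_iff split: if_splits)

lemma extreme_points_closed_Int_ivl:
  fixes K :: "real set"
  assumes "closed K" "{p..q} \<inter> K \<noteq> {}"
  obtains k1 k2 where "k1 \<in> {p..q} \<inter> K" "k2 \<in> {p..q} \<inter> K" "k1 \<le> k2"
    "{p<..<k1} \<inter> K = {}" "{k2<..<q} \<inter> K = {}"
proof -
  have "compact ({p..q} \<inter> K)"
    using assms(1) by (simp add: compact_Int_closed)
  then obtain k1 k2 where k1: "k1 \<in> {p..q} \<inter> K" "\<And>x. x \<in> {p..q} \<inter> K \<Longrightarrow> k1 \<le> x"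
    and k2: "k2 \<in> {p..q} \<inter> K" "\<And>x. x \<in> {p..q} \<inter> K \<Longrightarrow> x \<le> k2"
    using assms(2) compact_attains_inf compact_attains_sup by metis
  have "{p<..<k1} \<inter> K = {}"
  proof (rule ccontr)
    assume "{p<..<k1} \<inter> K \<noteq> {}"
    then obtain x where "x \<in> K" "p < x" "x < k1" by auto
    then show False using k1(1) k1(2)[of x] by simp
  qed
  moreover have "{k2<..<q} \<inter> K = {}"
  proof (rule ccontr)
    assume "{k2<..<q} \<inter> K \<noteq> {}"
    then obtain x where "x \<in> K" "k2 < x" "x < q" by auto
    then show False using k2(1) k2(2)[of x] by simp
  qed
  ultimately show ?thesis
    using that k1(1) k2(1) k2(2)[OF k1(1)] by blast
qed

context
  fixes F f :: "real \<Rightarrow> real" and K :: "real set" and r s :: real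
  assumes darboux_F: "darboux F"
    and cont_f: "continuous_on UNIV f"
    and oscillation_f: "\<And>x y. \<bar>f x - f y\<bar> < s - r"
    and closed_K: "closed K"
    and interior_K: "interior K = {}"
    and const_off_K: "\<And>a b. a \<le> b \<Longrightarrow> {a<..<b} \<inter> K = {} \<Longrightarrow> f a = f b"
    and span_K: "\<And>k. k \<in> K \<Longrightarrow> attains_span_near F r s k"
begin

lemma const_on_gap:
  assumes "{p<..<q} \<inter> K = {}" "z \<in> {p..q}"
  shows "f z = f p"
proof -
  have "{p<..<z} \<subseteq> {p<..<q}" using assms(2) by auto
  then have "{p<..<z} \<inter> K = {}" using assms(1) by blast
  then show ?thesis using const_off_K[of p z] assms(2) by simp
qed

lemma gap_around:
  assumes "a < b"
  obtains c d where "a \<le> c" "c < d" "d \<le> b" "{c<..<d} \<inter> K = {}"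
proof -
  obtain w where w: "w \<in> {a<..<b}" "w \<notin> K"
    using interior_K assms interior_maximal[of "{a<..<b}" K] by fastforce
  obtain e where "e > 0" "ball w e \<subseteq> - K"
    using closed_K w(2) open_contains_ball_eq[of "- K"] by (auto simp: closed_open)
  then show ?thesis
    using w(1) by (intro that[of "max a (w - e)" "min b (w + e)"])
      (auto simp: ball_eq_greaterThanLessThan)
qed

lemma attains_near_add:
  assumes "attains_near F k v1" "attains_near F k v2" "y - f k \<in> {v1<..<v2}"
  shows "attains_near (\<lambda>x. F x + f x) k y"
proof -
  obtain h where h: "h > 0" "onto_subintervals F (ball k h) {v1}" "onto_subintervals F (ball k h) {v2}"
    using attains_near_inter[OF assms(1,2)] .
  define \<eta> where "\<eta> = min (y - f k - v1) (v2 - (y - f k))"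
  have "\<eta> > 0" using assms(3) by (simp add: \<eta>_def)
  then obtain \<delta> where \<delta>: "\<delta> > 0" "\<And>x. dist x k < \<delta> \<Longrightarrow> dist (f x) (f k) < \<eta>"
    using cont_f continuous_on_eq_continuous_at[of UNIV f] continuous_at_eps_delta by fastforce
  have "onto_subintervals (\<lambda>x. F x + f x) (ball k (min h \<delta>)) {y}"
    unfolding onto_subintervals_def
  proof (intro allI impI)
    fix a b assume ab: "a < b" "{a<..<b} \<subseteq> ball k (min h \<delta>)"
    txt \<open>On a gap of \<open>K\<close> inside \<open>(a, b)\<close> the function \<open>f\<close> is constant and \<open>\<eta>\<close>-close to
      \<open>f k\<close>, so there \<open>F\<close> only has to hit a value between \<open>v1\<close> and \<open>v2\<close>.\<close>
    obtain c d where cd: "a \<le> c" "c < d" "d \<le> b" "{c<..<d} \<inter> K = {}"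
      using gap_around[OF ab(1)] .
    define w where "w = (c + d) / 2"
    have cd_ab: "{c<..<d} \<subseteq> {a<..<b}" using cd by auto
    have "w \<in> {c<..<d}" using cd(2) by (simp add: w_def)
    moreover have "ball k (min h \<delta>) \<subseteq> ball k \<delta>" by (simp add: subset_ball)
    ultimately have "w \<in> ball k \<delta>" using ab(2) cd_ab by blast
    then have "\<bar>f w - f k\<bar> < \<eta>"
      using \<delta>(2) by (simp add: dist_real_def dist_commute)
    then have between: "y - f w \<in> {min v1 v2..max v1 v2}"
      using assms(3) by (auto simp: \<eta>_def abs_less_iff)
    have "{c<..<d} \<subseteq> ball k h"
      using ab(2) cd_ab subset_ball[of "min h \<delta>" h] by auto
    then have "v1 \<in> F ` {c<..<d}" "v2 \<in> F ` {c<..<d}"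
      using h(2,3) cd(2) unfolding onto_subintervals_def by blast+
    then have "y - f w \<in> F ` {c<..<d}"
      using darboux_image_greaterThanLessThan[OF darboux_F _ _ between] by blast
    then obtain z where z: "z \<in> {c<..<d}" "F z = y - f w" by auto
    have "f z = f w"
      using const_on_gap[OF cd(4), of z] const_on_gap[OF cd(4), of w] z(1) \<open>w \<in> {c<..<d}\<close>
      by simp
    then show "{y} \<subseteq> (\<lambda>x. F x + f x) ` {a<..<b}"
      using z cd_ab by force
  qed
  then show ?thesis
    using h(1) \<delta>(1) unfolding attains_near_def by (intro exI[of _ "min h \<delta>"]) simp
qed

lemma attains_near_add_span:
  assumes "k \<in> K" "y - f k \<in> {min r (F k)<..<max s (F k)}"
  shows "attains_near (\<lambda>x. F x + f x) k y"
proof -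
  let ?lo = "min r (F k)" and ?hi = "max s (F k)"
  have "attains_near F k ((?lo + (y - f k)) / 2)" "attains_near F k ((?hi + (y - f k)) / 2)"
    using span_K[OF assms(1)] assms(2) unfolding attains_span_near_def by auto
  then show ?thesis
    using attains_near_add assms(2) by auto
qed

lemma add_intermediate_value_on_gap:
  assumes "p \<le> q" "{p<..<q} \<inter> K = {}"
    and "y \<in> {min (F p + f p) (F q + f q)..max (F p + f p) (F q + f q)}"
  shows "\<exists>z\<in>{p..q}. F z + f z = y"
proof -
  have "f q = f p"
    using const_on_gap[OF assms(2), of q] assms(1) by simp
  then have "y - f p \<in> {min (F p) (F q)..max (F p) (F q)}"
    using assms(3) by (auto simp: min_def max_def split: if_splits)
  then obtain z where z: "z \<in> {p..q}" "F z = y - f p"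
    using darboux_F assms(1) unfolding darboux_iff_intermediate_values by blast
  moreover have "f z = f p"
    using const_on_gap[OF assms(2) z(1)] .
  ultimately show ?thesis by force
qed

lemma add_intermediate_value:
  assumes pq: "p \<le> q"
    and y: "y \<in> {min (F p + f p) (F q + f q)..max (F p + f p) (F q + f q)}"
  shows "\<exists>z\<in>{p..q}. F z + f z = y"
proof (cases "{p..q} \<inter> K = {}")
  case True
  moreover have "{p<..<q} \<subseteq> {p..q}" by auto
  ultimately have "{p<..<q} \<inter> K = {}" by blast
  then show ?thesis using add_intermediate_value_on_gap pq y by blast
next
  case False
  let ?G = "\<lambda>x. F x + f x"
  obtain k1 k2 where k1: "k1 \<in> {p..q} \<inter> K" and k2: "k2 \<in> {p..q} \<inter> K" and "k1 \<le> k2"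
    and gap1: "{p<..<k1} \<inter> K = {}" and gap2: "{k2<..<q} \<inter> K = {}"
    using extreme_points_closed_Int_ivl[OF closed_K False] .
  consider "y \<in> {min (?G p) (?G k1)..max (?G p) (?G k1)}"
    | "y \<in> {min (?G k2) (?G q)..max (?G k2) (?G q)}"
    | "y \<in> {min (?G k1) (?G k2)<..<max (?G k1) (?G k2)}"
    using between_middle_if_not_between_ends y by blast
  then show ?thesis
  proof cases
    case 1
    then show ?thesis
      using add_intermediate_value_on_gap[OF _ gap1] k1 by fastforce
  next
    case 2
    then show ?thesis
      using add_intermediate_value_on_gap[OF _ gap2] k2 by fastforce
  next
    case 3
    then have "k1 < k2"
      using \<open>k1 \<le> k2\<close> by (cases "k1 = k2") auto
    from 3 have "y - f k1 \<in> {min r (F k1)<..<max s (F k1)} \<or> y - f k2 \<in> {min r (F k2)<..<max s (F k2)}"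
      using shifted_value_in_span oscillation_f by blast
    then have "attains_near ?G k1 y \<or> attains_near ?G k2 y"
      using attains_near_add_span k1 k2 by blast
    then have "\<exists>z\<in>{k1<..<k2}. ?G z = y"
      using attains_near_between \<open>k1 < k2\<close> by auto
    then show ?thesis
      using k1 k2 by force
  qed
qed

lemma darboux_add: "darboux (\<lambda>x. F x + f x)"
  unfolding darboux_iff_intermediate_values using add_intermediate_value by blast

end

section \<open>An interval on which \<open>F\<close> covers a fixed interval everywhere\<close>

lemma closure_Inter_open_dense:
  fixes \<G> :: "'a::{real_normed_vector,heine_borel} set set"
  assumes "countable \<G>" "\<And>T. T \<in> \<G> \<Longrightarrow> open T" "\<And>T. T \<in> \<G> \<Longrightarrow> closure T = UNIV"
  shows "closure (\<Inter>\<G>) = UNIV"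
  using Baire[OF closed_UNIV assms(1)] assms(2,3) by auto

lemma interior_frontier_closed:
  assumes "closed S"
  shows "interior (frontier S) = {}"
proof -
  have "interior (frontier S) \<subseteq> interior S"
    using frontier_subset_closed[OF assms] by (rule interior_mono)
  moreover have "interior (frontier S) \<subseteq> - interior S"
    using interior_subset[of "frontier S"] by (auto simp: frontier_def)
  ultimately show ?thesis by blast
qed

definition covers_near :: "(real \<Rightarrow> real) \<Rightarrow> real set \<Rightarrow> real \<Rightarrow> bool" where
  "covers_near F V x \<longleftrightarrow> (\<forall>h>0. V \<subseteq> F ` ball x h)"

lemma covers_near_rational_interval:
  assumes "covers_near F {c..d} x" "c < d"
  shows "\<exists>r\<in>\<rat>. \<exists>s\<in>\<rat>. r < s \<and> covers_near F {r<..<s} x"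
proof -
  obtain r where r: "r \<in> \<rat>" "c < r" "r < d"
    using Rats_dense_in_real[OF assms(2)] by blast
  obtain s where s: "s \<in> \<rat>" "r < s" "s < d"
    using Rats_dense_in_real[OF r(3)] by blast
  have "{r<..<s} \<subseteq> {c..d}" using r s by auto
  then show ?thesis
    using assms(1) r s unfolding covers_near_def by blast
qed

lemma discontinuity_covers_near:
  assumes dF: "darboux F" and "\<not> isCont F x"
  shows "\<exists>r\<in>\<rat>. \<exists>s\<in>\<rat>. r < s \<and> covers_near F {r<..<s} x"
proof -
  obtain e where e: "e > 0" "\<forall>d>0. \<exists>y. dist y x < d \<and> \<not> dist (F y) (F x) < e"
    using assms(2) continuous_at_eps_delta[of x F] by auto
  then have far: "\<exists>y. dist y x < d \<and> e \<le> \<bar>F y - F x\<bar>" if "d > 0" for d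
    using that by (auto simp: dist_real_def not_less)
  have "covers_near F {F x..F x + e} x \<or> covers_near F {F x - e..F x} x"
  proof (rule ccontr)
    assume "\<not> ?thesis"
    then obtain h1 h2 where h1: "h1 > 0" "\<not> {F x..F x + e} \<subseteq> F ` ball x h1"
      and h2: "h2 > 0" "\<not> {F x - e..F x} \<subseteq> F ` ball x h2"
      unfolding covers_near_def by blast
    define h where "h = min h1 h2"
    obtain y where y: "dist y x < h" "e \<le> \<bar>F y - F x\<bar>"
      using far[of h] h1(1) h2(1) by (auto simp: h_def)
    have I: "is_interval (F ` ball x h)"
      using dF is_interval_ball_real unfolding darboux_def by blast
    have Fx: "F x \<in> F ` ball x h" and Fy: "F y \<in> F ` ball x h"
      using h1(1) h2(1) y(1) by (auto simp: h_def dist_commute)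
    have sub: "F ` ball x h \<subseteq> F ` ball x h1" "F ` ball x h \<subseteq> F ` ball x h2"
      by (auto simp: h_def)
    have "{min (F x) (F y)..max (F x) (F y)} \<subseteq> F ` ball x h"
      using mem_is_interval_1_min_max[OF I Fx Fy] by blast
    moreover have "{F x..F x + e} \<subseteq> {min (F x) (F y)..max (F x) (F y)}
        \<or> {F x - e..F x} \<subseteq> {min (F x) (F y)..max (F x) (F y)}"
      using y(2) by (auto simp: abs_real_def split: if_splits)
    ultimately show False
      using sub h1(2) h2(2) by blast
  qed
  then show ?thesis
    using covers_near_rational_interval e(1) by force
qed

lemma covers_near_somewhere_dense:
  assumes dF: "darboux F" and "countable {x. isCont F x}"
  shows "\<exists>r\<in>\<rat>. \<exists>s\<in>\<rat>. r < s \<and> interior (closure {x. covers_near F {r<..<s} x}) \<noteq> {}"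
proof (rule ccontr)
  define E where "E r s = {x. covers_near F {r<..<s} x}" for r s
  define P :: "(real \<times> real) set" where "P = {p \<in> \<rat> \<times> \<rat>. fst p < snd p}"
  assume "\<not> ?thesis"
  then have none: "interior (closure (E (fst p) (snd p))) = {}" if "p \<in> P" for p
    using that unfolding P_def E_def by auto
  define \<G> where "\<G> = (\<lambda>p. - closure (E (fst p) (snd p))) ` P \<union> (\<lambda>c. - {c}) ` {x. isCont F x}"
  have "countable P"
    unfolding P_def by (intro countable_Collect countable_SIGMA countable_rat)
  then have "countable \<G>"
    unfolding \<G>_def using assms(2) by simp
  moreover have "open T \<and> closure T = UNIV" if "T \<in> \<G>" for T
    using that none unfolding \<G>_def by (auto simp: closure_complement)
  ultimately have "closure (\<Inter>\<G>) = UNIV"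
    using closure_Inter_open_dense by blast
  then have "\<Inter>\<G> \<noteq> {}"
    by (metis closure_empty UNIV_not_empty)
  then obtain x where x: "x \<in> \<Inter>\<G>"
    by blast
  then have "\<not> isCont F x"
    unfolding \<G>_def by blast
  then obtain r s where rs: "(r, s) \<in> P" "x \<in> E r s"
    using discontinuity_covers_near[OF dF, of x] unfolding P_def E_def by auto
  then have "- closure (E r s) \<in> \<G>"
    unfolding \<G>_def by (intro UnI1 image_eqI[where x = "(r, s)"]) simp_all
  then show False
    using x rs(2) closure_subset by blast
qed

lemma onto_subintervals_if_closure_covers_near:
  assumes "ball z \<rho> \<subseteq> closure {x. covers_near F V x}"
  shows "onto_subintervals F (ball z \<rho>) V"
  unfolding onto_subintervals_def
proof (intro allI impI)
  fix a b assume ab: "a < b" "{a<..<b} \<subseteq> ball z \<rho>"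
  have "(a + b) / 2 \<in> {a<..<b}"
    using ab(1) by simp
  then have "(a + b) / 2 \<in> {a<..<b} \<inter> closure {x. covers_near F V x}"
    using ab(2) assms by blast
  then obtain x where x: "x \<in> {a<..<b}" "covers_near F V x"
    using open_Int_closure_eq_empty[OF open_greaterThanLessThan] by blast
  define h where "h = min (x - a) (b - x)"
  have "h > 0" "ball x h \<subseteq> {a<..<b}"
    using x(1) by (auto simp: h_def ball_eq_greaterThanLessThan)
  then show "V \<subseteq> F ` {a<..<b}"
    using x(2) unfolding covers_near_def by blast
qed

lemma darboux_window:
  assumes "darboux F" and "countable {x. isCont F x}"
  obtains r s z \<rho> where "r < s" "\<rho> > 0" "onto_subintervals F (ball z \<rho>) {r<..<s}"
proof -
  obtain r s z where "r < s" "z \<in> interior (closure {x. covers_near F {r<..<s} x})"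
    using covers_near_somewhere_dense[OF assms] by blast
  moreover from this(2) obtain \<rho> where "\<rho> > 0"
    "ball z \<rho> \<subseteq> interior (closure {x. covers_near F {r<..<s} x})"
    using open_contains_ball_eq[OF open_interior] by blast
  ultimately show ?thesis
    using that onto_subintervals_if_closure_covers_near interior_subset by (meson subset_trans)
qed

section \<open>Level-regular points\<close>

text \<open>Near a level-regular point \<open>x\<close>, each rational level set \<open>{F > q}\<close>, \<open>{F < q}\<close> is either
  absent or dense.\<close>
definition level_regular :: "(real \<Rightarrow> real) \<Rightarrow> real \<Rightarrow> bool" where
  "level_regular F x \<longleftrightarrow>
     (\<forall>q\<in>\<rat>. x \<notin> frontier (closure {y. q < F y}) \<and> x \<notin> frontier (closure {y. F y < q}))"

lemma level_regular_irrational_Gdelta: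
  "\<exists>U :: nat \<Rightarrow> real set. (\<forall>n. open (U n)) \<and> closure (\<Inter>n. U n) = UNIV
     \<and> (\<forall>x\<in>(\<Inter>n. U n). x \<notin> \<rat> \<and> level_regular F x)"
proof -
  define \<G> where "\<G> = (\<lambda>q. - frontier (closure {y. q < F y})) ` \<rat>
    \<union> (\<lambda>q. - frontier (closure {y. F y < q})) ` \<rat> \<union> (\<lambda>q. - {q}) ` \<rat>"
  have "countable \<G>" "\<G> \<noteq> {}"
    unfolding \<G>_def by (auto intro: countable_rat)
  moreover have "open T \<and> closure T = UNIV" if "T \<in> \<G>" for T
    using that unfolding \<G>_def
    by (auto simp: closure_complement interior_frontier_closed open_Compl)
  ultimately have "closure (\<Inter>\<G>) = UNIV"
    using closure_Inter_open_dense by blast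
  moreover have "x \<notin> \<rat> \<and> level_regular F x" if "x \<in> \<Inter>\<G>" for x
    using that unfolding \<G>_def level_regular_def by blast
  moreover have "(\<Inter>n. from_nat_into \<G> n) = \<Inter>\<G>" "open (from_nat_into \<G> n)" for n
    using \<open>countable \<G>\<close> \<open>\<G> \<noteq> {}\<close> \<open>\<And>T. T \<in> \<G> \<Longrightarrow> open T \<and> closure T = UNIV\<close>
    by (simp_all add: from_nat_into)
  ultimately show ?thesis
    by (intro exI[of _ "from_nat_into \<G>"]) simp
qed

lemma attains_near_if_interior_closure:
  assumes dF: "darboux F" and x: "x \<in> interior (closure S)" and u: "attains_near F x u"
    and v: "\<And>w. w \<in> S \<Longrightarrow> v \<in> {min u (F w)..max u (F w)}"
  shows "attains_near F x v"
proof -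
  obtain h1 where "h1 > 0" "ball x h1 \<subseteq> interior (closure S)"
    using x open_contains_ball_eq[OF open_interior] by blast
  then have h1: "h1 > 0" "ball x h1 \<subseteq> closure S"
    using interior_subset by blast+
  obtain h2 where h2: "h2 > 0" "onto_subintervals F (ball x h2) {u}"
    using u unfolding attains_near_def by blast
  have "onto_subintervals F (ball x (min h1 h2)) {v}"
    unfolding onto_subintervals_def
  proof (intro allI impI)
    fix a b assume ab: "a < b" "{a<..<b} \<subseteq> ball x (min h1 h2)"
    moreover have "ball x (min h1 h2) \<subseteq> ball x h1" "ball x (min h1 h2) \<subseteq> ball x h2"
      by (simp_all add: subset_ball)
    ultimately have in_closure: "{a<..<b} \<subseteq> closure S" and in_ball: "{a<..<b} \<subseteq> ball x h2"
      using h1(2) by blast+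
    have "(a + b) / 2 \<in> {a<..<b}"
      using ab(1) by simp
    then have "{a<..<b} \<inter> closure S \<noteq> {}"
      using in_closure by blast
    then obtain w where w: "w \<in> {a<..<b}" "w \<in> S"
      using open_Int_closure_eq_empty[OF open_greaterThanLessThan] by blast
    have "u \<in> F ` {a<..<b}"
      using h2(2) ab(1) in_ball unfolding onto_subintervals_def by blast
    moreover have "F w \<in> F ` {a<..<b}"
      using w(1) by (rule imageI)
    ultimately have "v \<in> F ` {a<..<b}"
      using v[OF w(2)] by (rule darboux_image_greaterThanLessThan[OF dF])
    then show "{v} \<subseteq> F ` {a<..<b}"
      by simp
  qed
  then show ?thesis
    using h1(1) h2(1) unfolding attains_near_def by (intro exI[of _ "min h1 h2"]) simp
qed

lemma attains_span_near_if_level_regular: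
  assumes dF: "darboux F" and window: "onto_subintervals F (ball z \<rho>) {r<..<s}" and "r < s"
    and x: "x \<in> ball z \<rho>" and regular: "level_regular F x"
  shows "attains_span_near F r s x"
  unfolding attains_span_near_def
proof
  fix v assume v: "v \<in> {min r (F x)<..<max s (F x)}"
  have mid: "attains_near F x ((r + s) / 2)"
    using attains_near_ball[OF window open_ball x] \<open>r < s\<close> by simp
  have dense_side: "x \<in> interior (closure S)" if "x \<in> S" "x \<notin> frontier (closure S)" for S
    using that closure_subset by (auto simp: frontier_def)
  have "r < v \<or> F x < v" "v < s \<or> v < F x"
    using v by auto
  then consider "v \<in> {r<..<s}" | "s \<le> v" "v < F x" | "v \<le> r" "F x < v"
    by (cases "v < s"; cases "r < v") auto
  then show "attains_near F x v"
  proof cases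
    case 1
    then show ?thesis
      using attains_near_ball[OF window open_ball x] by blast
  next
    case 2
    then obtain q where q: "q \<in> \<rat>" "v < q" "q < F x"
      using Rats_dense_in_real by blast
    then have "x \<in> interior (closure {y. q < F y})"
      using regular dense_side unfolding level_regular_def by simp
    moreover have "v \<in> {min ((r + s) / 2) (F w)..max ((r + s) / 2) (F w)}" if "w \<in> {y. q < F y}" for w
      using that q(2) 2(1) \<open>r < s\<close> by auto
    ultimately show ?thesis
      using attains_near_if_interior_closure[OF dF _ mid] by blast
  next
    case 3
    then obtain q where q: "q \<in> \<rat>" "F x < q" "q < v"
      using Rats_dense_in_real by blast
    then have "x \<in> interior (closure {y. F y < q})"
      using regular dense_side unfolding level_regular_def by simp
    moreover have "v \<in> {min ((r + s) / 2) (F w)..max ((r + s) / 2) (F w)}" if "w \<in> {y. F y < q}" for w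
      using that q(3) 3(1) \<open>r < s\<close> by auto
    ultimately show ?thesis
      using attains_near_if_interior_closure[OF dF _ mid] by blast
  qed
qed

section \<open>Cantor functions inside a dense \<open>G\<^sub>\<delta>\<close>\<close>

lemma dyadic_between:
  fixes u v :: real
  assumes "0 \<le> u" "u < v" "v \<le> 1"
  shows "\<exists>n k. k < (2::nat) ^ n \<and> u < real k / 2 ^ n \<and> real k / 2 ^ n < v"
proof -
  obtain n where n: "1 / (v - u) < 2 ^ n"
    using real_arch_pow[of 2 "1 / (v - u)"] by auto
  have pos: "(0::real) < 2 ^ n" by simp
  have gap: "1 < (v - u) * 2 ^ n"
    using n assms(2) by (simp add: field_simps)
  define k where "k = nat (\<lfloor>u * 2 ^ n\<rfloor> + 1)"
  have k: "real k = real_of_int \<lfloor>u * 2 ^ n\<rfloor> + 1"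
    using assms(1) by (simp add: k_def)
  have "u * 2 ^ n < real k" "real k \<le> u * 2 ^ n + 1"
    using k by linarith+
  then have lower: "u < real k / 2 ^ n" and upper: "real k / 2 ^ n < v"
    using pos gap by (simp_all add: field_simps)
  have "real k < v * 2 ^ n"
    using upper pos by (simp add: field_simps)
  also have "\<dots> \<le> 2 ^ n"
    using assms(3) by (simp add: mult_le_cancel_right1)
  finally have "k < 2 ^ n"
    by (metis of_nat_less_iff of_nat_numeral of_nat_power)
  then show ?thesis using lower upper by blast
qed

lemma continuous_on_mono_dense_values:
  fixes f :: "real \<Rightarrow> real"
  assumes "mono f" and range: "\<And>x. f x \<in> {c..d}"
    and dense: "\<And>u v. c \<le> u \<Longrightarrow> u < v \<Longrightarrow> v \<le> d \<Longrightarrow> \<exists>x. u < f x \<and> f x < v"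
  shows "continuous_on UNIV f"
proof -
  have "(f \<longlongrightarrow> f x) (at x)" for x
  proof (rule order_tendstoI)
    fix u assume "u < f x"
    show "\<forall>\<^sub>F y in at x. u < f y"
    proof (cases "u < c")
      case True
      then show ?thesis using range by (auto intro: always_eventually less_le_trans)
    next
      case False
      then obtain x' where x': "u < f x'" "f x' < f x"
        using dense[of u "f x"] \<open>u < f x\<close> range[of x] by auto
      then have "x' < x"
        using \<open>mono f\<close> by (metis monoD not_le not_less)
      then have "\<forall>\<^sub>F y in at x. x' < y"
        by (rule order_tendstoD(1)[OF tendsto_ident_at])
      then show ?thesis
        by eventually_elim (use x'(1) \<open>mono f\<close> in \<open>meson less_le_trans monoD less_imp_le\<close>)
    qed
  next
    fix v assume "f x < v"
    show "\<forall>\<^sub>F y in at x. f y < v"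
    proof (cases "d < v")
      case True
      then show ?thesis using range by (auto intro: always_eventually le_less_trans)
    next
      case False
      then obtain x' where x': "f x < f x'" "f x' < v"
        using dense[of "f x" v] \<open>f x < v\<close> range[of x] by auto
      then have "x < x'"
        using \<open>mono f\<close> by (metis monoD not_le not_less)
      then have "\<forall>\<^sub>F y in at x. y < x'"
        by (rule order_tendstoD(2)[OF tendsto_ident_at])
      then show ?thesis
        by eventually_elim (use x'(2) \<open>mono f\<close> in \<open>meson le_less_trans monoD less_imp_le\<close>)
    qed
  qed
  then show ?thesis
    by (simp add: continuous_on_eq_continuous_at isCont_def)
qed

locale cantor_scheme =
  fixes U :: "nat \<Rightarrow> real set" and a0 b0 :: real
  assumes open_U: "\<And>n. open (U n)"
    and endpoints: "a0 < b0" "a0 \<in> (\<Inter>m. U m)" "b0 \<in> (\<Inter>m. U m)"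
    and dense: "{a0..b0} \<subseteq> closure (\<Inter>m. U m)"
begin

lemma Inter_U_between:
  assumes "a0 \<le> x" "x < y" "y \<le> b0"
  shows "\<exists>z\<in>(\<Inter>m. U m). x < z \<and> z < y"
proof -
  have "(x + y) / 2 \<in> {x<..<y}" "(x + y) / 2 \<in> closure (\<Inter>m. U m)"
    using assms dense by auto
  then have "{x<..<y} \<inter> closure (\<Inter>m. U m) \<noteq> {}" by blast
  then have "{x<..<y} \<inter> (\<Inter>m. U m) \<noteq> {}"
    using open_Int_closure_eq_empty[OF open_greaterThanLessThan] by blast
  then show ?thesis by auto
qed

definition admissible_split :: "nat \<Rightarrow> real \<Rightarrow> real \<Rightarrow> real \<times> real \<Rightarrow> bool" where
  "admissible_split n a b cd \<longleftrightarrow>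
     a < fst cd \<and> fst cd < snd cd \<and> snd cd < b \<and> fst cd \<in> (\<Inter>m. U m) \<and> snd cd \<in> (\<Inter>m. U m)
     \<and> {a..fst cd} \<subseteq> U n \<and> {snd cd..b} \<subseteq> U n"

definition split_cell :: "nat \<Rightarrow> real \<Rightarrow> real \<Rightarrow> real \<times> real" where
  "split_cell n a b = (SOME cd. admissible_split n a b cd)"

lemma admissible_split_exists:
  assumes "a < b" "a \<in> (\<Inter>m. U m)" "b \<in> (\<Inter>m. U m)" "a0 \<le> a" "b \<le> b0"
  shows "\<exists>cd. admissible_split n a b cd"
proof -
  obtain e1 e2 where e1: "e1 > 0" "ball a e1 \<subseteq> U n" and e2: "e2 > 0" "ball b e2 \<subseteq> U n"
    using open_U assms(2,3) open_contains_ball_eq by (metis INT_iff UNIV_I)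
  define mid where "mid = (a + b) / 2"
  have "a < mid" "mid < b" "min (a + e1 / 2) mid \<le> b0" "a0 \<le> max (b - e2 / 2) mid"
    using assms(1,4,5) by (auto simp: mid_def min_le_iff_disj le_max_iff_disj)
  obtain c where c: "c \<in> (\<Inter>m. U m)" "a < c" "c < min (a + e1 / 2) mid"
    using Inter_U_between[of a "min (a + e1 / 2) mid"] \<open>a < mid\<close> \<open>min (a + e1 / 2) mid \<le> b0\<close>
      assms(4) e1(1) by auto
  obtain d where d: "d \<in> (\<Inter>m. U m)" "max (b - e2 / 2) mid < d" "d < b"
    using Inter_U_between[of "max (b - e2 / 2) mid" b] \<open>mid < b\<close> \<open>a0 \<le> max (b - e2 / 2) mid\<close>
      assms(5) e2(1) by auto
  have "{a..c} \<subseteq> ball a e1" "{d..b} \<subseteq> ball b e2"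
    using c d by (auto simp: dist_real_def)
  then have "admissible_split n a b (c, d)"
    using c d e1 e2 unfolding admissible_split_def by (auto simp: mid_def)
  then show ?thesis ..
qed

lemma admissible_split_cell:
  assumes "a < b" "a \<in> (\<Inter>m. U m)" "b \<in> (\<Inter>m. U m)" "a0 \<le> a" "b \<le> b0"
  shows "admissible_split n a b (split_cell n a b)"
  unfolding split_cell_def using admissible_split_exists[OF assms] by (rule someI_ex)

text \<open>The \<open>k\<close>-th cell of level \<open>n\<close> (for \<open>k < 2 ^ n\<close>) is split into the cells \<open>2 k\<close> and
  \<open>2 k + 1\<close> of level \<open>n + 1\<close>.\<close>
fun cell :: "nat \<Rightarrow> nat \<Rightarrow> real \<times> real" where
  "cell 0 k = (a0, b0)"
| "cell (Suc n) k = (let p = cell n (k div 2); cd = split_cell n (fst p) (snd p) in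
     if even k then (fst p, fst cd) else (snd cd, snd p))"

definition lo :: "nat \<Rightarrow> nat \<Rightarrow> real" where "lo n k = fst (cell n k)"
definition hi :: "nat \<Rightarrow> nat \<Rightarrow> real" where "hi n k = snd (cell n k)"

lemma lo_0 [simp]: "lo 0 k = a0" and hi_0 [simp]: "hi 0 k = b0"
  by (simp_all add: lo_def hi_def)

lemma lo_Suc: "lo (Suc n) k =
    (if even k then lo n (k div 2) else snd (split_cell n (lo n (k div 2)) (hi n (k div 2))))"
  and hi_Suc: "hi (Suc n) k =
    (if even k then fst (split_cell n (lo n (k div 2)) (hi n (k div 2))) else hi n (k div 2))"
  by (simp_all add: lo_def hi_def Let_def)

lemma cell_valid:
  "k < 2 ^ n \<Longrightarrow> lo n k < hi n k \<and> lo n k \<in> (\<Inter>m. U m) \<and> hi n k \<in> (\<Inter>m. U m)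
     \<and> a0 \<le> lo n k \<and> hi n k \<le> b0"
proof (induction n arbitrary: k)
  case 0
  then show ?case using endpoints by simp
next
  case (Suc n)
  then have "k div 2 < 2 ^ n" by simp
  with Suc.IH have IH: "lo n (k div 2) < hi n (k div 2)" "lo n (k div 2) \<in> (\<Inter>m. U m)"
      "hi n (k div 2) \<in> (\<Inter>m. U m)" "a0 \<le> lo n (k div 2)" "hi n (k div 2) \<le> b0"
    by blast+
  show ?case
    using admissible_split_cell[OF IH, of n] IH unfolding admissible_split_def lo_Suc hi_Suc
    by (auto simp del: INT_iff)
qed

lemma child_cell_subset:
  assumes "k < 2 ^ Suc n"
  shows "lo n (k div 2) \<le> lo (Suc n) k" "hi (Suc n) k \<le> hi n (k div 2)"
    and "{lo (Suc n) k..hi (Suc n) k} \<subseteq> U n"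
proof -
  have "k div 2 < 2 ^ n" using assms by simp
  then have IH: "lo n (k div 2) < hi n (k div 2)" "lo n (k div 2) \<in> (\<Inter>m. U m)"
      "hi n (k div 2) \<in> (\<Inter>m. U m)" "a0 \<le> lo n (k div 2)" "hi n (k div 2) \<le> b0"
    using cell_valid by blast+
  show "lo n (k div 2) \<le> lo (Suc n) k" "hi (Suc n) k \<le> hi n (k div 2)"
    and "{lo (Suc n) k..hi (Suc n) k} \<subseteq> U n"
    using admissible_split_cell[OF IH, of n] IH unfolding admissible_split_def lo_Suc hi_Suc
    by (auto simp del: INT_iff atLeastAtMost_iff)
qed

lemma cells_ordered: "j < k \<Longrightarrow> k < 2 ^ n \<Longrightarrow> hi n j < lo n k"
proof (induction n arbitrary: j k)
  case 0
  then show ?case by simp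
next
  case (Suc n)
  show ?case
  proof (cases "j div 2 = k div 2")
    case True
    then have "even j" "odd k" using Suc.prems(1) by presburger+
    have "k div 2 < 2 ^ n" using Suc.prems(2) by simp
    then have "lo n (k div 2) < hi n (k div 2)" "lo n (k div 2) \<in> (\<Inter>m. U m)"
        "hi n (k div 2) \<in> (\<Inter>m. U m)" "a0 \<le> lo n (k div 2)" "hi n (k div 2) \<le> b0"
      using cell_valid by blast+
    from admissible_split_cell[OF this, of n] show ?thesis
      using \<open>even j\<close> \<open>odd k\<close> True unfolding admissible_split_def lo_Suc hi_Suc by simp
  next
    case False
    then have "j div 2 < k div 2" using Suc.prems(1) by (simp add: div_le_mono le_neq_implies_less)
    then have "hi n (j div 2) < lo n (k div 2)"
      using Suc.IH Suc.prems(2) by simp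
    then show ?thesis
      using child_cell_subset[of j n] child_cell_subset[of k n] Suc.prems by simp
  qed
qed

lemma lo_strict_mono: "j < k \<Longrightarrow> k < 2 ^ n \<Longrightarrow> lo n j < lo n k"
  using cell_valid[of j n] cells_ordered[of j k n] by simp

lemma lo_lift: "lo (m + d) (j * 2 ^ d) = lo m j"
proof (induction d)
  case 0
  then show ?case by simp
next
  case (Suc d)
  have "j * 2 ^ Suc d = 2 * (j * 2 ^ d)" by simp
  then show ?case using Suc by (simp add: lo_Suc)
qed

lemma cell_nested:
  "j < 2 ^ (m + d) \<Longrightarrow> lo m (j div 2 ^ d) \<le> lo (m + d) j \<and> hi (m + d) j \<le> hi m (j div 2 ^ d)"
proof (induction d arbitrary: j)
  case 0
  then show ?case by simp
next
  case (Suc d)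
  then have "j div 2 < 2 ^ (m + d)" by simp
  from Suc.IH[OF this] have
    "lo m (j div 2 ^ Suc d) \<le> lo (m + d) (j div 2) \<and> hi (m + d) (j div 2) \<le> hi m (j div 2 ^ Suc d)"
    by (simp add: div_mult2_eq)
  then show ?case
    using child_cell_subset[of j "m + d"] Suc.prems by simp
qed

definition cantor_set :: "real set" where
  "cantor_set = (\<Inter>n. \<Union>k<2 ^ n. {lo n k..hi n k})"

lemma closed_cantor_set: "closed cantor_set"
  unfolding cantor_set_def by (intro closed_INT closed_UN) auto

lemma cantor_set_subset: "cantor_set \<subseteq> (\<Inter>m. U m) \<inter> {a0..b0}"
proof
  fix x assume x: "x \<in> cantor_set"
  have "x \<in> U n" for n
  proof -
    obtain k where "k < 2 ^ Suc n" "x \<in> {lo (Suc n) k..hi (Suc n) k}"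
      using x unfolding cantor_set_def by blast
    then show ?thesis using child_cell_subset(3) by blast
  qed
  moreover obtain k where "k < 2 ^ 0" "x \<in> {lo 0 k..hi 0 k}"
    using x unfolding cantor_set_def by blast
  then have "x \<in> {a0..b0}" by simp
  ultimately show "x \<in> (\<Inter>m. U m) \<inter> {a0..b0}" by blast
qed

lemma lo_in_cantor_set:
  assumes "k < 2 ^ n"
  shows "lo n k \<in> cantor_set"
  unfolding cantor_set_def
proof
  fix m
  show "lo n k \<in> (\<Union>j<2 ^ m. {lo m j..hi m j})"
  proof (cases "m \<le> n")
    case True
    then obtain d where d: "n = m + d" using le_Suc_ex by blast
    then have "k div 2 ^ d < 2 ^ m"
      using assms by (simp add: div_less_iff_less_mult power_add)
    moreover have "lo m (k div 2 ^ d) \<le> lo n k" "hi n k \<le> hi m (k div 2 ^ d)"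
      using cell_nested[of k m d] assms d by simp_all
    ultimately show ?thesis
      using cell_valid[OF assms] by force
  next
    case False
    then obtain d where d: "m = n + d" by (metis le_Suc_ex nat_le_linear)
    then have "k * 2 ^ d < 2 ^ m"
      using assms by (simp add: power_add)
    moreover from this have "lo m (k * 2 ^ d) < hi m (k * 2 ^ d)"
      using cell_valid by blast
    ultimately show ?thesis
      using lo_lift[of n d k] d by force
  qed
qed

lemma dyadic_le_if_lo_le:
  assumes "j < 2 ^ m" "k < 2 ^ n" "lo m j \<le> lo n k"
  shows "real j / 2 ^ m \<le> real k / 2 ^ n"
proof -
  have lift_j: "lo (m + n) (j * 2 ^ n) = lo m j"
    by (rule lo_lift)
  have lift_k: "lo (m + n) (k * 2 ^ m) = lo n k"
    using lo_lift[of n m k] by (simp only: add.commute)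
  have "j * 2 ^ n \<le> k * 2 ^ m"
  proof (rule ccontr)
    assume "\<not> j * 2 ^ n \<le> k * 2 ^ m"
    moreover have "j * 2 ^ n < 2 ^ (m + n)"
      using assms(1) by (simp add: power_add)
    ultimately have "lo (m + n) (k * 2 ^ m) < lo (m + n) (j * 2 ^ n)"
      by (intro lo_strict_mono) simp_all
    then show False
      using assms(3) unfolding lift_j lift_k by simp
  qed
  then have "real (j * 2 ^ n) \<le> real (k * 2 ^ m)"
    by (rule of_nat_mono)
  then show ?thesis by (simp add: field_simps)
qed

text \<open>The \<open>0\<close> keeps the supremum meaningful left of \<open>a0\<close>, where no left endpoint lies below.\<close>
definition cantor_fun :: "real \<Rightarrow> real" where
  "cantor_fun x = Sup (insert 0 {real k / 2 ^ n | n k. k < (2::nat) ^ n \<and> lo n k \<le> x})"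

lemma cantor_fun_values_bounded:
  assumes "w \<in> insert 0 {real k / 2 ^ n | n k. k < (2::nat) ^ n \<and> lo n k \<le> x}"
  shows "0 \<le> w \<and> w < 1"
proof (cases "w = 0")
  case False
  then obtain n k where "k < (2::nat) ^ n" "w = real k / 2 ^ n"
    using assms by blast
  moreover from this(1) have "real k < 2 ^ n"
    by (metis of_nat_less_iff of_nat_numeral of_nat_power)
  ultimately show ?thesis by simp
qed simp

lemma bdd_above_cantor_fun_values:
  "bdd_above (insert 0 {real k / 2 ^ n | n k. k < (2::nat) ^ n \<and> lo n k \<le> x})"
  using cantor_fun_values_bounded by (meson bdd_above.I less_imp_le)

lemma cantor_fun_range: "cantor_fun x \<in> {0..1}"
proof -
  have "0 \<le> cantor_fun x"
    unfolding cantor_fun_def by (rule cSup_upper[OF _ bdd_above_cantor_fun_values]) simp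
  moreover have "cantor_fun x \<le> 1"
    unfolding cantor_fun_def using cantor_fun_values_bounded by (intro cSup_least) force+
  ultimately show ?thesis by simp
qed

lemma mono_cantor_fun: "mono cantor_fun"
proof
  fix x y :: real assume "x \<le> y"
  then have "insert 0 {real k / 2 ^ n | n k. k < (2::nat) ^ n \<and> lo n k \<le> x}
      \<subseteq> insert 0 {real k / 2 ^ n | n k. k < (2::nat) ^ n \<and> lo n k \<le> y}"
    by force
  then show "cantor_fun x \<le> cantor_fun y"
    unfolding cantor_fun_def by (rule cSup_subset_mono[OF insert_not_empty bdd_above_cantor_fun_values])
qed

lemma cantor_fun_lo:
  assumes "k < 2 ^ n"
  shows "cantor_fun (lo n k) = real k / 2 ^ n"
  unfolding cantor_fun_def
proof (rule cSup_eq_maximum)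
  show "real k / 2 ^ n \<in> insert 0 {real j / 2 ^ m | m j. j < (2::nat) ^ m \<and> lo m j \<le> lo n k}"
    using assms by blast
next
  fix w assume "w \<in> insert 0 {real j / 2 ^ m | m j. j < (2::nat) ^ m \<and> lo m j \<le> lo n k}"
  then show "w \<le> real k / 2 ^ n"
    using dyadic_le_if_lo_le[OF _ assms] by auto
qed

lemma continuous_cantor_fun: "continuous_on UNIV cantor_fun"
proof (rule continuous_on_mono_dense_values[OF mono_cantor_fun cantor_fun_range])
  fix u v :: real assume "0 \<le> u" "u < v" "v \<le> 1"
  then obtain n k where "k < (2::nat) ^ n" "u < real k / 2 ^ n" "real k / 2 ^ n < v"
    using dyadic_between by blast
  then show "\<exists>x. u < cantor_fun x \<and> cantor_fun x < v"
    by (intro exI[of _ "lo n k"]) (simp add: cantor_fun_lo)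
qed

lemma cantor_fun_const_off_cantor_set:
  assumes "a \<le> b" "{a<..<b} \<inter> cantor_set = {}"
  shows "cantor_fun a = cantor_fun b"
proof (rule ccontr)
  assume "cantor_fun a \<noteq> cantor_fun b"
  moreover have "cantor_fun a \<le> cantor_fun b"
    using assms(1) by (rule monoD[OF mono_cantor_fun])
  moreover have "0 \<le> cantor_fun a" "cantor_fun b \<le> 1"
    using cantor_fun_range[of a] cantor_fun_range[of b] by auto
  ultimately obtain n k where nk: "k < (2::nat) ^ n"
    "cantor_fun a < real k / 2 ^ n" "real k / 2 ^ n < cantor_fun b"
    using dyadic_between[of "cantor_fun a" "cantor_fun b"] by auto
  have "a < lo n k"
  proof (rule ccontr)
    assume "\<not> a < lo n k"
    then have "cantor_fun (lo n k) \<le> cantor_fun a" by (simp add: monoD[OF mono_cantor_fun])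
    then show False using nk(2) cantor_fun_lo[OF nk(1)] by simp
  qed
  moreover have "lo n k < b"
  proof (rule ccontr)
    assume "\<not> lo n k < b"
    then have "cantor_fun b \<le> cantor_fun (lo n k)" by (simp add: monoD[OF mono_cantor_fun])
    then show False using nk(3) cantor_fun_lo[OF nk(1)] by simp
  qed
  ultimately show False
    using lo_in_cantor_set[OF nk(1)] assms(2) by auto
qed

lemma cantor_fun_lo_0_1: "cantor_fun (lo 0 0) \<noteq> cantor_fun (lo 1 1)"
  using cantor_fun_lo[of 0 0] cantor_fun_lo[of 1 1] by simp

end

lemma dense_pair_in_ball:
  fixes S :: "real set"
  assumes "closure S = UNIV" "\<rho> > 0"
  obtains a b where "a \<in> S" "b \<in> S" "a < b" "{a..b} \<subseteq> ball z \<rho>"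
proof -
  have between: "\<exists>w\<in>S. c < w \<and> w < d" if "c < d" for c d
    using that assms(1) open_Int_closure_eq_empty[OF open_greaterThanLessThan, of c d S] by auto
  obtain a b where "a \<in> S" "z - \<rho> < a" "a < z" "b \<in> S" "z < b" "b < z + \<rho>"
    using between[of "z - \<rho>" z] between[of z "z + \<rho>"] assms(2) by auto
  then show ?thesis
    by (intro that[of a b]) (auto simp: ball_eq_greaterThanLessThan)
qed

lemma (in cantor_scheme) darboux_add_cantor_fun:
  assumes dF: "darboux F" and "r < s"
    and good: "\<And>x. x \<in> (\<Inter>n. U n) \<inter> {a0..b0} \<Longrightarrow> x \<notin> \<rat> \<and> attains_span_near F r s x"
  shows "darboux (\<lambda>x. F x + (s - r) / 2 * cantor_fun x)"
proof (rule darboux_add[OF dF _ _ closed_cantor_set])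
  show "continuous_on UNIV (\<lambda>x. (s - r) / 2 * cantor_fun x)"
    by (intro continuous_intros continuous_cantor_fun)
  show "\<bar>(s - r) / 2 * cantor_fun x - (s - r) / 2 * cantor_fun y\<bar> < s - r" for x y
  proof -
    have "\<bar>cantor_fun x - cantor_fun y\<bar> \<le> 1"
      using cantor_fun_range[of x] cantor_fun_range[of y] by auto
    have "\<bar>(s - r) / 2 * cantor_fun x - (s - r) / 2 * cantor_fun y\<bar>
        = (s - r) / 2 * \<bar>cantor_fun x - cantor_fun y\<bar>"
      unfolding right_diff_distrib[symmetric] abs_mult using \<open>r < s\<close> by simp
    also have "\<dots> \<le> (s - r) / 2"
      using \<open>\<bar>cantor_fun x - cantor_fun y\<bar> \<le> 1\<close> \<open>r < s\<close> by (intro mult_left_le) auto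
    also have "\<dots> < s - r"
      using \<open>r < s\<close> by simp
    finally show ?thesis .
  qed
  have "interior cantor_set \<subseteq> interior (- \<rat>)"
    using cantor_set_subset good by (intro interior_mono) blast
  then show "interior cantor_set = {}"
    by (simp add: interior_complement Rats_closure_real)
  show "(s - r) / 2 * cantor_fun a = (s - r) / 2 * cantor_fun b"
    if "a \<le> b" "{a<..<b} \<inter> cantor_set = {}" for a b
    using cantor_fun_const_off_cantor_set[OF that] by simp
  show "attains_span_near F r s k" if "k \<in> cantor_set" for k
    using that cantor_set_subset good by blast
qed

theorem mainTheorem6:
  fixes F :: "real \<Rightarrow> real"
  assumes "darboux F"
    and "countable {x. isCont F x}"
  shows "\<exists>f :: real \<Rightarrow> real. continuous_on UNIV f \<and> (\<exists>a b. f a \<noteq> f b)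
           \<and> darboux (\<lambda>x. F x + f x)"
proof -
  obtain r s z \<rho> where "r < s" "\<rho> > 0" and window: "onto_subintervals F (ball z \<rho>) {r<..<s}"
    using darboux_window[OF assms] .
  obtain U :: "nat \<Rightarrow> real set" where U: "\<And>n. open (U n)" "closure (\<Inter>n. U n) = UNIV"
    and good: "\<And>x. x \<in> (\<Inter>n. U n) \<Longrightarrow> x \<notin> \<rat> \<and> level_regular F x"
    using level_regular_irrational_Gdelta[of F] by blast
  obtain a0 b0 where ab: "a0 \<in> (\<Inter>n. U n)" "b0 \<in> (\<Inter>n. U n)" "a0 < b0" "{a0..b0} \<subseteq> ball z \<rho>"
    using dense_pair_in_ball[OF U(2) \<open>\<rho> > 0\<close>] .
  interpret cantor_scheme U a0 b0
    using U ab by unfold_locales auto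
  let ?f = "\<lambda>x. (s - r) / 2 * cantor_fun x"
  have "darboux (\<lambda>x. F x + ?f x)"
    using darboux_add_cantor_fun[OF assms(1) \<open>r < s\<close>] good ab(4)
      attains_span_near_if_level_regular[OF assms(1) window \<open>r < s\<close>] by blast
  moreover have "continuous_on UNIV ?f"
    by (intro continuous_intros continuous_cantor_fun)
  moreover have "?f (lo 0 0) \<noteq> ?f (lo 1 1)"
    using cantor_fun_lo_0_1 \<open>r < s\<close> by simp
  ultimately show ?thesis by blast
qed

end
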